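(* Let $f\in L^1(\mathbb{R}^2)$ and suppose there is $R>0$ with $\operatorname{supp} f\subset B(0;R)$. Let $C>0$ be a constant such that $C\|u\|_{L^2(\mathbb{R}^2)}\le \int_{\mathbb{R}^2}|u_x|+|u_y|$ for all $u\in BV(\mathbb{R}^2)$, and set $\lambda_0:=\frac{C}{R\sqrt{\pi}}$. If $0\le\lambda<\lambda_0$, then $u=0$ is the unique minimizer of $F_1$ over $BV(\mathbb{R}^2)$ and the unique minimizer of $\overline{F_1}$ over $BV(\mathbb{R}^2;\{0,1\})$.
   Context: For $u\in L^1_{loc}(\mathbb{R}^2)$ the anisotropic total variation is $\int_{\mathbb{R}^2}|u_x|+|u_y|:=\sup\{\int_{\mathbb{R}^2}u\,\mathrm{div}\,v : v\in C^1_c(\mathbb{R}^2;\mathbb{R}^2),\ |v(x)|_\infty\le 1\ \forall x\}$, where $|(a,b)|_\infty=\max(|a|,|b|)$. $BV(\mathbb{R}^2)$ is the space of $u\in L^1(\mathbb{R}^2)$ with finite (isotropic) total variation, and for $A\subset\mathbb{R}$, $BV(\mathbb{R}^2;A)$ denotes those $u\in BV(\mathbb{R}^2)$ with $u(x)\in A$ for a.e. $x$. For a fidelity parameter $\lambda\ge0$ and signal $f\in L^1(\mathbb{R}^2)$: $F_1(u)=\int_{\mathbb{R}^2}|u_x|+|u_y|+\lambda\|u-f\|_{L^1(\mathbb{R}^2)}$ for $u\in BV(\mathbb{R}^2)$, and $\overline{F_1}$ is the same expression restricted to $u\in BV(\mathbb{R}^2;\{0,1\})$. *)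

theory Defs
  imports "HOL-Analysis.Analysis"
begin

type_synonym R2 = "real^2"

definition C1c :: "(R2 \<Rightarrow> R2) \<Rightarrow> bool" where
  "C1c v \<longleftrightarrow>
     (\<exists>D :: R2 \<Rightarrow> (R2 \<Rightarrow>\<^sub>L R2).
        (\<forall>x. (v has_derivative blinfun_apply (D x)) (at x)) \<and> continuous_on UNIV D)
     \<and> compact (closure {x. v x \<noteq> 0})"

definition divergence :: "(R2 \<Rightarrow> R2) \<Rightarrow> R2 \<Rightarrow> real" where
  "divergence v x = (\<Sum>i\<in>UNIV. (frechet_derivative v (at x) (axis i 1)) $ i)"

definition aniso_TV :: "(R2 \<Rightarrow> real) \<Rightarrow> ereal" where
  "aniso_TV u = (SUP v \<in> {v. C1c v \<and> (\<forall>x. \<forall>i. \<bar>v x $ i\<bar> \<le> 1)}.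
                   ereal (\<integral>x. u x * divergence v x \<partial>lebesgue))"

definition iso_TV :: "(R2 \<Rightarrow> real) \<Rightarrow> ereal" where
  "iso_TV u = (SUP v \<in> {v. C1c v \<and> (\<forall>x. norm (v x) \<le> 1)}.
                   ereal (\<integral>x. u x * divergence v x \<partial>lebesgue))"

definition BV :: "(R2 \<Rightarrow> real) set" where
  "BV = {u. integrable lebesgue u \<and> iso_TV u < \<infinity>}"

definition BV_vals :: "real set \<Rightarrow> (R2 \<Rightarrow> real) set" where
  "BV_vals A = {u \<in> BV. AE x in lebesgue. u x \<in> A}"

definition L1norm :: "(R2 \<Rightarrow> real) \<Rightarrow> real" where
  "L1norm u = (\<integral>x. \<bar>u x\<bar> \<partial>lebesgue)"

definition L2norm :: "(R2 \<Rightarrow> real) \<Rightarrow> ereal" where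
  "L2norm u = (if u \<in> borel_measurable lebesgue \<and> integrable lebesgue (\<lambda>x. (u x)\<^sup>2)
               then ereal (sqrt (\<integral>x. (u x)\<^sup>2 \<partial>lebesgue)) else \<infinity>)"

definition F1 :: "real \<Rightarrow> (R2 \<Rightarrow> real) \<Rightarrow> (R2 \<Rightarrow> real) \<Rightarrow> ereal" where
  "F1 lam f u = aniso_TV u + ereal (lam * L1norm (\<lambda>x. u x - f x))"

end

theory Submission
  imports Defs
begin

(* Let u \<in> BV with finite anisotropic total variation T = TV(u), and write
   B = ball 0 R, so |B| = \<pi> R\<^sup>2 and f vanishes outside B.  Then
     \<parallel>f\<parallel>\<^sub>1 \<le> \<parallel>u - f\<parallel>\<^sub>1 + \<integral>\<^sub>B |u|                  (triangle inequality on B)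
           \<le> \<parallel>u - f\<parallel>\<^sub>1 + \<surd>|B| \<parallel>u\<parallel>\<^sub>2             (Cauchy-Schwarz)
           \<le> \<parallel>u - f\<parallel>\<^sub>1 + (R \<surd>\<pi> / C) T          (Sobolev inequality).
   Multiplying by \<lambda> gives the coercivity estimate
     F1(0) + (1 - \<kappa>) T \<le> F1(u),   \<kappa> = \<lambda> R \<surd>\<pi> / C < 1.
   Hence 0 minimises F1 over BV, and any u with F1(u) \<le> F1(0) has T = 0, so \<parallel>u\<parallel>\<^sub>2 = 0
   and u = 0 a.e.  Since 0 also takes values in {0,1}, the same holds over BV({0,1}). *)

lemma C1c_zero: "C1c (\<lambda>x. 0)"
  unfolding C1c_def by (auto intro!: exI[of _ "\<lambda>x. 0"] simp: zero_blinfun.rep_eq)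

lemma divergence_zero: "divergence (\<lambda>x. 0) x = 0"
proof -
  have "frechet_derivative (\<lambda>x::R2. 0::R2) (at x) = (\<lambda>h. 0)"
    using frechet_derivative_at[OF has_derivative_const] by metis
  then show ?thesis unfolding divergence_def by simp
qed

text \<open>Testing with the zero field shows that the total variation is never negative.\<close>
lemma aniso_TV_nonneg: "aniso_TV u \<ge> 0"
proof -
  have "(\<lambda>x. 0::R2) \<in> {v. C1c v \<and> (\<forall>x. \<forall>i. \<bar>v x $ i\<bar> \<le> 1)}"
    using C1c_zero by simp
  then have "ereal (\<integral>x. u x * divergence (\<lambda>x. 0) x \<partial>lebesgue) \<le> aniso_TV u"
    unfolding aniso_TV_def by (rule SUP_upper)
  then show ?thesis by (simp add: divergence_zero zero_ereal_def)
qed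

lemma aniso_TV_zero: "aniso_TV (\<lambda>x. 0) = 0"
proof -
  have "{v. C1c v \<and> (\<forall>x. \<forall>i. \<bar>v x $ i\<bar> \<le> 1)} \<noteq> {}"
    using C1c_zero by force
  then show ?thesis
    unfolding aniso_TV_def using SUP_const[of _ "0::ereal"] by (simp add: zero_ereal_def)
qed

lemma iso_TV_zero: "iso_TV (\<lambda>x. 0) = 0"
proof -
  have "{v. C1c v \<and> (\<forall>x. norm (v x) \<le> 1)} \<noteq> {}"
    using C1c_zero by force
  then show ?thesis
    unfolding iso_TV_def using SUP_const[of _ "0::ereal"] by (simp add: zero_ereal_def)
qed

lemma zero_in_BV_vals: "(\<lambda>x. 0) \<in> BV_vals {0, 1}"
  by (simp add: BV_vals_def BV_def iso_TV_zero)

text \<open>If \<open>2s \<le> t a + m/t\<close> for every \<open>t > 0\<close>, then \<open>s \<le> \<surd>(a m)\<close>: the right-hand side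
  is minimised at \<open>t = \<surd>(m/a)\<close> (the case \<open>a = 0\<close> is handled by letting \<open>t\<close> grow).\<close>
lemma le_sqrt_mult_if_le_am_gm:
  fixes s a m :: real
  assumes "a \<ge> 0" "m > 0" and bound: "\<And>t. t > 0 \<Longrightarrow> s \<le> (t * a + m / t) / 2"
  shows "s \<le> sqrt a * sqrt m"
proof (cases "a = 0")
  case True
  show ?thesis
  proof (rule ccontr)
    assume "\<not> ?thesis"
    with True have s: "s > 0" by simp
    have "s \<le> (m / s * a + m / (m / s)) / 2"
      using bound[of "m / s"] s assms by simp
    with True s assms show False by simp
  qed
next
  case False
  with assms have a: "a > 0" by simp
  define t where "t = sqrt m / sqrt a"
  have "t > 0" "t * a = sqrt a * sqrt m" "m / t = sqrt a * sqrt m"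
    using a assms unfolding t_def by (simp_all add: field_simps)
  then show ?thesis using bound[of t] by simp
qed

lemma integral_abs_on_set_le_L2:
  fixes u :: "'a \<Rightarrow> real"
  assumes u_meas [measurable]: "u \<in> borel_measurable M"
    and u_sq: "integrable M (\<lambda>x. (u x)\<^sup>2)"
    and B [measurable]: "B \<in> sets M" and B_fin: "emeasure M B < \<infinity>" and B_pos: "measure M B > 0"
  shows "(\<integral>x. \<bar>u x\<bar> * indicator B x \<partial>M) \<le> sqrt (\<integral>x. (u x)\<^sup>2 \<partial>M) * sqrt (measure M B)"
proof (rule le_sqrt_mult_if_le_am_gm[OF _ B_pos])
  show "(\<integral>x. (u x)\<^sup>2 \<partial>M) \<ge> 0" by simp
next
  fix t :: real
  assume t: "t > 0"
  have ind: "integrable M (\<lambda>x. indicator B x :: real)"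
    using B_fin by (simp add: integrable_indicator_iff)
  have pointwise: "\<bar>u x\<bar> * indicator B x \<le> (t * (u x)\<^sup>2 + indicator B x / t) / 2" for x
  proof -
    have "0 \<le> (t * \<bar>u x\<bar> - 1)\<^sup>2 / t" using t by simp
    then have "2 * \<bar>u x\<bar> \<le> t * (u x)\<^sup>2 + 1 / t"
      using t by (simp add: field_simps power2_eq_square)
    then show ?thesis using t by (simp add: indicator_def)
  qed
  have majorant: "integrable M (\<lambda>x. (t * (u x)\<^sup>2 + indicator B x / t) / 2)"
    using u_sq ind by auto
  have "integrable M (\<lambda>x. \<bar>u x\<bar> * indicator B x)"
  proof (rule Bochner_Integration.integrable_bound[OF majorant])
    show "AE x in M. norm (\<bar>u x\<bar> * indicator B x) \<le> norm ((t * (u x)\<^sup>2 + indicator B x / t) / 2)"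
    proof (intro AE_I2)
      fix x
      have "0 \<le> \<bar>u x\<bar> * indicator B x" by simp
      with pointwise[of x] show "norm (\<bar>u x\<bar> * indicator B x) \<le> norm ((t * (u x)\<^sup>2 + indicator B x / t) / 2)"
        unfolding real_norm_def by linarith
    qed
  qed simp
  then have "(\<integral>x. \<bar>u x\<bar> * indicator B x \<partial>M) \<le> (\<integral>x. (t * (u x)\<^sup>2 + indicator B x / t) / 2 \<partial>M)"
    using majorant pointwise by (rule integral_mono)
  also have "\<dots> = (t * (\<integral>x. (u x)\<^sup>2 \<partial>M) + measure M B / t) / 2"
    using u_sq ind by simp
  finally show "(\<integral>x. \<bar>u x\<bar> * indicator B x \<partial>M) \<le> (t * (\<integral>x. (u x)\<^sup>2 \<partial>M) + measure M B / t) / 2" .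
qed

lemma L1_norm_le_dist_plus_local_mass:
  fixes u f :: "'a \<Rightarrow> real"
  assumes "integrable M f" "integrable M u" and B: "B \<in> sets M"
    and supp: "AE x in M. f x \<noteq> 0 \<longrightarrow> x \<in> B"
  shows "(\<integral>x. \<bar>f x\<bar> \<partial>M) \<le> (\<integral>x. \<bar>u x - f x\<bar> \<partial>M) + (\<integral>x. \<bar>u x\<bar> * indicator B x \<partial>M)"
proof -
  have uB: "integrable M (\<lambda>x. \<bar>u x\<bar> * indicator B x)"
    using integrable_mult_indicator[OF B integrable_abs[OF assms(2)]] by (simp add: mult.commute)
  have "(\<integral>x. \<bar>f x\<bar> \<partial>M) \<le> (\<integral>x. \<bar>u x - f x\<bar> + \<bar>u x\<bar> * indicator B x \<partial>M)"
  proof (rule integral_mono_AE)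
    show "AE x in M. \<bar>f x\<bar> \<le> \<bar>u x - f x\<bar> + \<bar>u x\<bar> * indicator B x"
      using supp by eventually_elim (auto simp: indicator_def)
  qed (use assms uB in auto)
  also have "\<dots> = (\<integral>x. \<bar>u x - f x\<bar> \<partial>M) + (\<integral>x. \<bar>u x\<bar> * indicator B x \<partial>M)"
    using assms uB by simp
  finally show ?thesis .
qed

lemma measure_ball_R2: "R \<ge> 0 \<Longrightarrow> measure lebesgue (ball (0::R2) R) = R\<^sup>2 * pi"
  using circle_area[of R 0] by (simp add: measure_completion)

lemma emeasure_ball_R2_finite: "emeasure lebesgue (ball (0::R2) R) < \<infinity>"
  using emeasure_bounded_finite[of "ball (0::R2) R"] by (simp add: emeasure_completion)

lemma sobolev_L2_bound:
  assumes sobolev: "\<forall>u\<in>BV. ereal C * L2norm u \<le> aniso_TV u"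
    and C_pos: "C > 0" and u: "u \<in> BV" and T: "aniso_TV u = ereal T"
  shows "u \<in> borel_measurable lebesgue" "integrable lebesgue (\<lambda>x. (u x)\<^sup>2)"
    and "C * sqrt (\<integral>x. (u x)\<^sup>2 \<partial>lebesgue) \<le> T"
proof -
  have sob: "ereal C * L2norm u \<le> ereal T"
    using sobolev u T by auto
  with C_pos have L2: "u \<in> borel_measurable lebesgue \<and> integrable lebesgue (\<lambda>x. (u x)\<^sup>2)"
    by (auto simp: L2norm_def split: if_splits)
  then show "u \<in> borel_measurable lebesgue" "integrable lebesgue (\<lambda>x. (u x)\<^sup>2)"
    by auto
  show "C * sqrt (\<integral>x. (u x)\<^sup>2 \<partial>lebesgue) \<le> T"
    using sob L2 by (simp add: L2norm_def)
qed

lemma F1_coercive: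
  fixes f u :: "R2 \<Rightarrow> real" and R C lam T :: real
  assumes f_L1: "integrable lebesgue f"
    and R_pos: "R > 0"
    and supp: "AE x in lebesgue. f x \<noteq> 0 \<longrightarrow> x \<in> ball 0 R"
    and C_pos: "C > 0"
    and sobolev: "\<forall>u\<in>BV. ereal C * L2norm u \<le> aniso_TV u"
    and lam_nonneg: "0 \<le> lam"
    and u: "u \<in> BV" and T: "aniso_TV u = ereal T"
  shows "lam * L1norm f + (1 - lam * R * sqrt pi / C) * T \<le> T + lam * L1norm (\<lambda>x. u x - f x)"
proof -
  define B where "B = ball (0::R2) R"
  define norm2 where "norm2 = sqrt (\<integral>x. (u x)\<^sup>2 \<partial>lebesgue)"
  note L2 = sobolev_L2_bound[OF sobolev C_pos u T]
  have u_L1: "integrable lebesgue u" using u by (simp add: BV_def)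
  have B_meas: "measure lebesgue B = R\<^sup>2 * pi"
    unfolding B_def using R_pos measure_ball_R2[of R] by linarith
  have "(\<integral>x. \<bar>u x\<bar> * indicator B x \<partial>lebesgue) \<le> norm2 * sqrt (measure lebesgue B)"
    unfolding norm2_def
  proof (rule integral_abs_on_set_le_L2[OF L2(1,2)])
    show "B \<in> sets lebesgue" "emeasure lebesgue B < \<infinity>"
      unfolding B_def using emeasure_ball_R2_finite by auto
    show "measure lebesgue B > 0"
      unfolding B_meas using R_pos by simp
  qed
  also have "\<dots> = norm2 * sqrt (R\<^sup>2 * pi)"
    unfolding B_meas ..
  also have "\<dots> = R * sqrt pi * norm2"
    using R_pos by (simp add: real_sqrt_mult)
  finally have local_mass: "(\<integral>x. \<bar>u x\<bar> * indicator B x \<partial>lebesgue) \<le> R * sqrt pi * norm2" .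
  have "lam * L1norm f \<le> lam * (L1norm (\<lambda>x. u x - f x) + R * sqrt pi * norm2)"
    using L1_norm_le_dist_plus_local_mass[OF f_L1 u_L1, of B] supp local_mass lam_nonneg
    unfolding B_def L1norm_def by (auto intro!: mult_left_mono)
  moreover have "lam * (R * sqrt pi * norm2) \<le> lam * R * sqrt pi / C * T"
  proof -
    have "lam * (R * sqrt pi * norm2) = lam * R * sqrt pi / C * (C * norm2)"
      using C_pos by simp
    also have "\<dots> \<le> lam * R * sqrt pi / C * T"
      using L2(3) lam_nonneg R_pos C_pos unfolding norm2_def by (intro mult_left_mono) auto
    finally show ?thesis .
  qed
  ultimately show ?thesis by (simp add: algebra_simps)
qed

lemma zero_strict_minimizer_F1:
  fixes f u :: "R2 \<Rightarrow> real" and R C lam :: real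
  assumes f_L1: "integrable lebesgue f"
    and R_pos: "R > 0"
    and supp: "AE x in lebesgue. f x \<noteq> 0 \<longrightarrow> x \<in> ball 0 R"
    and C_pos: "C > 0"
    and sobolev: "\<forall>u\<in>BV. ereal C * L2norm u \<le> aniso_TV u"
    and lam_nonneg: "0 \<le> lam"
    and lam_small: "lam < C / (R * sqrt pi)"
    and u: "u \<in> BV"
  shows "F1 lam f (\<lambda>x. 0) \<le> F1 lam f u"
    and "F1 lam f u \<le> F1 lam f (\<lambda>x. 0) \<Longrightarrow> AE x in lebesgue. u x = 0"
proof -
  have F1_zero: "F1 lam f (\<lambda>x. 0) = ereal (lam * L1norm f)"
    by (simp add: F1_def aniso_TV_zero L1norm_def)
  consider "aniso_TV u = \<infinity>" | T where "aniso_TV u = ereal T" "T \<ge> 0"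
    using aniso_TV_nonneg[of u] by (cases "aniso_TV u") auto
  then have "F1 lam f (\<lambda>x. 0) \<le> F1 lam f u \<and>
             (F1 lam f u \<le> F1 lam f (\<lambda>x. 0) \<longrightarrow> (AE x in lebesgue. u x = 0))"
  proof cases
    case 1
    then show ?thesis by (simp add: F1_def F1_zero aniso_TV_zero)
  next
    case (2 T)
    define \<kappa> where "\<kappa> = lam * R * sqrt pi / C"
    have \<kappa>: "\<kappa> < 1"
      using lam_small R_pos C_pos unfolding \<kappa>_def by (simp add: field_simps)
    have F1_u: "F1 lam f u = ereal (T + lam * L1norm (\<lambda>x. u x - f x))"
      by (simp add: F1_def 2)
    have coercive: "lam * L1norm f + (1 - \<kappa>) * T \<le> T + lam * L1norm (\<lambda>x. u x - f x)"
      unfolding \<kappa>_def by (rule F1_coercive[OF f_L1 R_pos supp C_pos sobolev lam_nonneg u 2(1)])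
    have "(1 - \<kappa>) * T \<ge> 0" using \<kappa> 2(2) by simp
    with coercive have "F1 lam f (\<lambda>x. 0) \<le> F1 lam f u"
      unfolding F1_zero F1_u by simp
    moreover have "AE x in lebesgue. u x = 0" if "F1 lam f u \<le> F1 lam f (\<lambda>x. 0)"
    proof -
      from that coercive have "(1 - \<kappa>) * T \<le> 0" unfolding F1_zero F1_u by simp
      with \<kappa> 2(2) have "T = 0" by (simp add: mult_le_0_iff)
      with sobolev_L2_bound[OF sobolev C_pos u 2(1)] C_pos
      have "integrable lebesgue (\<lambda>x. (u x)\<^sup>2)" "(\<integral>x. (u x)\<^sup>2 \<partial>lebesgue) = 0"
        by (auto simp: mult_le_0_iff intro: antisym)
      then have "AE x in lebesgue. (u x)\<^sup>2 = 0"
        by (simp add: integral_nonneg_eq_0_iff_AE)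
      then show ?thesis by eventually_elim simp
    qed
    ultimately show ?thesis by blast
  qed
  then show "F1 lam f (\<lambda>x. 0) \<le> F1 lam f u"
    and "F1 lam f u \<le> F1 lam f (\<lambda>x. 0) \<Longrightarrow> AE x in lebesgue. u x = 0"
    by blast+
qed

theorem mainTheorem1:
  fixes f :: "R2 \<Rightarrow> real" and R C lam :: real
  assumes f_L1: "integrable lebesgue f"
    and R_pos: "R > 0"
    and supp: "AE x in lebesgue. f x \<noteq> 0 \<longrightarrow> x \<in> ball 0 R"
    and C_pos: "C > 0"
    and sobolev: "\<forall>u\<in>BV. ereal C * L2norm u \<le> aniso_TV u"
    and lam_nonneg: "0 \<le> lam"
    and lam_small: "lam < C / (R * sqrt pi)"
  shows "(\<forall>w\<in>BV. F1 lam f (\<lambda>x. 0) \<le> F1 lam f w)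
       \<and> (\<forall>u\<in>BV. (\<forall>w\<in>BV. F1 lam f u \<le> F1 lam f w) \<longrightarrow> (AE x in lebesgue. u x = 0))
       \<and> (\<lambda>x. 0) \<in> BV_vals {0, 1}
       \<and> (\<forall>w\<in>BV_vals {0, 1}. F1 lam f (\<lambda>x. 0) \<le> F1 lam f w)
       \<and> (\<forall>u\<in>BV_vals {0, 1}. (\<forall>w\<in>BV_vals {0, 1}. F1 lam f u \<le> F1 lam f w)
              \<longrightarrow> (AE x in lebesgue. u x = 0))"
proof -
  note minimal = zero_strict_minimizer_F1(1)[OF assms]
  note unique = zero_strict_minimizer_F1(2)[OF assms]
  have zero: "(\<lambda>x. 0) \<in> BV_vals {0, 1}" by (rule zero_in_BV_vals)
  have sub: "BV_vals {0, 1} \<subseteq> BV" by (auto simp: BV_vals_def)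
  from zero sub have "(\<lambda>x. 0) \<in> BV" by blast
  with minimal unique zero sub show ?thesis by blast
qed

end
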